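(* Let $\Delta>0$, $\varepsilon_{\mathrm{opt}}<\Delta$ and $b'=b+\Delta$. Let $\bar\pi$ be a policy with $\hat V^{\bar\pi}_{r_p}(\rho)\ge\hat V^{\hat\pi^*}_{r_p}(\rho)-\varepsilon_{\mathrm{opt}}$ and $\hat V^{\bar\pi}_c(\rho)\ge b'-\varepsilon_{\mathrm{opt}}$ (e.g. the output $\bar\pi_T$ of the primal-dual algorithm under the conditions of its guarantee). Suppose $$|V^{\bar\pi}_c(\rho)-\hat V^{\bar\pi}_c(\rho)|\le\Delta-\varepsilon_{\mathrm{opt}},\qquad|V^{\pi^*}_c(\rho)-\hat V^{\pi^*}_c(\rho)|\le\Delta.$$ Then (a) $V^{\bar\pi}_c(\rho)\ge b$, and (b) $$V^{\pi^*}_r(\rho)-V^{\bar\pi}_r(\rho)\le\frac{2\omega}{1-\gamma}+\varepsilon_{\mathrm{opt}}+2\Delta\lambda^*+|V^{\pi^*}_{r_p}(\rho)-\hat V^{\pi^*}_{r_p}(\rho)|+|\hat V^{\bar\pi}_{r_p}(\rho)-V^{\bar\pi}_{r_p}(\rho)|.$$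
   Context: A discounted CMDP $M=\langle\mathcal S,\mathcal A,\mathcal P,r,c,b,\rho,\gamma\rangle$ with finite state and action sets, reward $r:\mathcal S\times\mathcal A\to[0,1]$, constraint reward $c:\mathcal S\times\mathcal A\to[0,1]$, threshold $b$, initial distribution $\rho$, discount $\gamma\in[0,1)$. $V^\pi_g(\rho)$ is the discounted value of policy $\pi$ for reward $g$ under $\mathcal P$, $s_0\sim\rho$; hats denote values under an empirical kernel $\hat{\mathcal P}$. $r_p=r+\xi$ with $\xi(s,a)\in[0,\omega]$. $\pi^*$ is an optimal policy of $\max_\pi V^\pi_r(\rho)$ s.t. $V^\pi_c(\rho)\ge b$; $\hat\pi^*$ is an optimal policy of $\max_\pi\hat V^\pi_{r_p}(\rho)$ s.t. $\hat V^\pi_c(\rho)\ge b'$, and $\lambda^*\ge0$ its optimal dual variable, i.e. a minimizer over $\lambda\ge0$ of $\max_\pi[\hat V^\pi_{r_p}(\rho)+\lambda(\hat V^\pi_c(\rho)-b')]$ (strong duality holds). *)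

theory Defs
  imports "HOL-Analysis.Analysis"
begin

text \<open>A transition kernel is P s a s' (probability of moving to s' from s under a).
  A (stationary, randomized) policy is \<pi> s a (probability of action a in state s).\<close>

definition is_dist :: "('s::finite \<Rightarrow> real) \<Rightarrow> bool" where
  "is_dist \<rho> \<longleftrightarrow> (\<forall>s. 0 \<le> \<rho> s) \<and> (\<Sum>s\<in>UNIV. \<rho> s) = 1"

definition is_kernel :: "('s::finite \<Rightarrow> 'a::finite \<Rightarrow> 's \<Rightarrow> real) \<Rightarrow> bool" where
  "is_kernel P \<longleftrightarrow> (\<forall>s a. is_dist (P s a))"

definition is_policy :: "('s::finite \<Rightarrow> 'a::finite \<Rightarrow> real) \<Rightarrow> bool" where
  "is_policy \<pi> \<longleftrightarrow> (\<forall>s. is_dist (\<pi> s))"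

primrec state_dist ::
  "('s::finite \<Rightarrow> 'a::finite \<Rightarrow> 's \<Rightarrow> real) \<Rightarrow> ('s \<Rightarrow> 'a \<Rightarrow> real) \<Rightarrow> ('s \<Rightarrow> real) \<Rightarrow> nat \<Rightarrow> 's \<Rightarrow> real"
where
  "state_dist P \<pi> \<rho> 0 = \<rho>"
| "state_dist P \<pi> \<rho> (Suc t) =
     (\<lambda>s'. \<Sum>s\<in>UNIV. state_dist P \<pi> \<rho> t s * (\<Sum>a\<in>UNIV. \<pi> s a * P s a s'))"

definition value_fn ::
  "('s::finite \<Rightarrow> 'a::finite \<Rightarrow> 's \<Rightarrow> real) \<Rightarrow> real \<Rightarrow> ('s \<Rightarrow> real) \<Rightarrow> ('s \<Rightarrow> 'a \<Rightarrow> real)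
   \<Rightarrow> ('s \<Rightarrow> 'a \<Rightarrow> real) \<Rightarrow> real"
where
  "value_fn P \<gamma> \<rho> g \<pi> =
     (\<Sum>t. \<gamma> ^ t * (\<Sum>s\<in>UNIV. state_dist P \<pi> \<rho> t s * (\<Sum>a\<in>UNIV. \<pi> s a * g s a)))"

definition cmdp_optimal ::
  "('s::finite \<Rightarrow> 'a::finite \<Rightarrow> 's \<Rightarrow> real) \<Rightarrow> real \<Rightarrow> ('s \<Rightarrow> real) \<Rightarrow> ('s \<Rightarrow> 'a \<Rightarrow> real)
   \<Rightarrow> ('s \<Rightarrow> 'a \<Rightarrow> real) \<Rightarrow> real \<Rightarrow> ('s \<Rightarrow> 'a \<Rightarrow> real) \<Rightarrow> bool"
where
  "cmdp_optimal P \<gamma> \<rho> r c b \<pi>opt \<longleftrightarrow>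
     is_policy \<pi>opt \<and> value_fn P \<gamma> \<rho> c \<pi>opt \<ge> b \<and>
     (\<forall>\<pi>. is_policy \<pi> \<and> value_fn P \<gamma> \<rho> c \<pi> \<ge> b \<longrightarrow> value_fn P \<gamma> \<rho> r \<pi> \<le> value_fn P \<gamma> \<rho> r \<pi>opt)"

definition dual_fn ::
  "('s::finite \<Rightarrow> 'a::finite \<Rightarrow> 's \<Rightarrow> real) \<Rightarrow> real \<Rightarrow> ('s \<Rightarrow> real) \<Rightarrow> ('s \<Rightarrow> 'a \<Rightarrow> real)
   \<Rightarrow> ('s \<Rightarrow> 'a \<Rightarrow> real) \<Rightarrow> real \<Rightarrow> real \<Rightarrow> real"
where
  "dual_fn P \<gamma> \<rho> r c b lam =
     (SUP \<pi>\<in>{\<pi>. is_policy \<pi>}. value_fn P \<gamma> \<rho> r \<pi> + lam * (value_fn P \<gamma> \<rho> c \<pi> - b))"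

end

theory Submission
  imports Defs
begin

text \<open>Part (a): the empirical constraint value of
  \<open>\<pi>bar\<close> is at least \<open>b + \<Delta> - \<epsilon>opt\<close>, and the model error on it is at most \<open>\<Delta> - \<epsilon>opt\<close>.
  Part (b): \<open>\<pi>star\<close> is feasible for the true problem, hence violates the tightened empirical
  constraint by at most \<open>2\<Delta>\<close>; evaluating the empirical Lagrangian at \<open>\<pi>star\<close> and using strong
  duality gives \<open>V\<^sub>r\<^sub>p(\<pi>star) - 2\<Delta>\<cdot>lamstar \<le> V\<^sub>r\<^sub>p(\<pi>hatstar) \<le> V\<^sub>r\<^sub>p(\<pi>bar) + \<epsilon>opt\<close> under \<open>Phat\<close>. Passing between
  \<open>Phat\<close> and \<open>P\<close> costs the two model-error terms, and between \<open>r\<close> and \<open>r + \<xi>\<close> at most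
  \<open>\<omega>/(1-\<gamma>)\<close>.\<close>

lemma sum_dist_bounds:
  assumes "is_dist d" and "\<And>x. m \<le> f x \<and> f x \<le> M"
  shows "m \<le> (\<Sum>x\<in>UNIV. d x * f x) \<and> (\<Sum>x\<in>UNIV. d x * f x) \<le> M"
proof -
  have d: "\<And>x. 0 \<le> d x" "(\<Sum>x\<in>UNIV. d x) = 1"
    using assms(1) unfolding is_dist_def by auto
  have "(\<Sum>x\<in>UNIV. d x * m) \<le> (\<Sum>x\<in>UNIV. d x * f x)"
       "(\<Sum>x\<in>UNIV. d x * f x) \<le> (\<Sum>x\<in>UNIV. d x * M)"
    by (intro sum_mono mult_left_mono; use assms(2) d in auto)+
  moreover have "(\<Sum>x\<in>UNIV. d x * k) = k" for k
    using d by (simp add: sum_distrib_right[symmetric])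
  ultimately show ?thesis by simp
qed

lemma state_dist_is_dist:
  assumes "is_kernel P" and "is_policy \<pi>" and "is_dist \<rho>"
  shows "is_dist (state_dist P \<pi> \<rho> t)"
proof (induction t)
  case 0
  then show ?case using assms(3) by simp
next
  case (Suc t)
  let ?d = "state_dist P \<pi> \<rho> t"
  have \<pi>: "\<And>s. is_dist (\<pi> s)" and P: "\<And>s a. is_dist (P s a)"
    using assms(1,2) unfolding is_policy_def is_kernel_def by auto
  have "(\<Sum>s'\<in>UNIV. \<Sum>s\<in>UNIV. ?d s * (\<Sum>a\<in>UNIV. \<pi> s a * P s a s'))
      = (\<Sum>s\<in>UNIV. ?d s * (\<Sum>a\<in>UNIV. \<pi> s a * (\<Sum>s'\<in>UNIV. P s a s')))"
  proof -
    have "(\<Sum>s'\<in>UNIV. \<Sum>s\<in>UNIV. ?d s * (\<Sum>a\<in>UNIV. \<pi> s a * P s a s'))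
        = (\<Sum>s\<in>UNIV. ?d s * (\<Sum>s'\<in>UNIV. \<Sum>a\<in>UNIV. \<pi> s a * P s a s'))"
      by (subst sum.swap) (simp add: sum_distrib_left)
    also have "\<dots> = (\<Sum>s\<in>UNIV. ?d s * (\<Sum>a\<in>UNIV. \<Sum>s'\<in>UNIV. \<pi> s a * P s a s'))"
      by (subst (2) sum.swap) (rule refl)
    finally show ?thesis by (simp add: sum_distrib_left)
  qed
  also have "\<dots> = 1"
    using P \<pi> Suc by (simp add: is_dist_def)
  finally have total: "(\<Sum>s'\<in>UNIV. \<Sum>s\<in>UNIV. ?d s * (\<Sum>a\<in>UNIV. \<pi> s a * P s a s')) = 1" .
  have "0 \<le> ?d s * (\<Sum>a\<in>UNIV. \<pi> s a * P s a s')" for s s'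
    using P \<pi> Suc unfolding is_dist_def by (auto intro!: sum_nonneg mult_nonneg_nonneg)
  then show ?case
    using total by (simp add: is_dist_def sum_nonneg)
qed

definition expected_reward ::
  "('s::finite \<Rightarrow> 'a::finite \<Rightarrow> 's \<Rightarrow> real) \<Rightarrow> ('s \<Rightarrow> 'a \<Rightarrow> real) \<Rightarrow> ('s \<Rightarrow> real)
   \<Rightarrow> ('s \<Rightarrow> 'a \<Rightarrow> real) \<Rightarrow> nat \<Rightarrow> real"
where
  "expected_reward P \<pi> \<rho> g t =
     (\<Sum>s\<in>UNIV. state_dist P \<pi> \<rho> t s * (\<Sum>a\<in>UNIV. \<pi> s a * g s a))"

lemma value_fn_expected_reward:
  "value_fn P \<gamma> \<rho> g \<pi> = (\<Sum>t. \<gamma> ^ t * expected_reward P \<pi> \<rho> g t)"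
  by (simp add: value_fn_def expected_reward_def)

lemma expected_reward_bounds:
  assumes "is_kernel P" and "is_policy \<pi>" and "is_dist \<rho>"
    and "\<And>s a. m \<le> g s a \<and> g s a \<le> M"
  shows "m \<le> expected_reward P \<pi> \<rho> g t \<and> expected_reward P \<pi> \<rho> g t \<le> M"
  unfolding expected_reward_def
proof (rule sum_dist_bounds[OF state_dist_is_dist[OF assms(1-3)]])
  fix s
  show "m \<le> (\<Sum>a\<in>UNIV. \<pi> s a * g s a) \<and> (\<Sum>a\<in>UNIV. \<pi> s a * g s a) \<le> M"
    using assms(2,4) unfolding is_policy_def by (intro sum_dist_bounds) auto
qed

lemma summable_discounted_expected_reward:
  assumes "is_kernel P" and "is_policy \<pi>" and "is_dist \<rho>"
    and "\<And>s a. m \<le> g s a \<and> g s a \<le> M" and "0 \<le> \<gamma>" "\<gamma> < 1"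
  shows "summable (\<lambda>t. \<gamma> ^ t * expected_reward P \<pi> \<rho> g t)"
proof (rule summable_comparison_test)
  let ?B = "max \<bar>m\<bar> \<bar>M\<bar>"
  have "\<bar>expected_reward P \<pi> \<rho> g t\<bar> \<le> ?B" for t
    using expected_reward_bounds[where g=g, OF assms(1-4)] by (smt (verit))
  then show "\<exists>N. \<forall>t\<ge>N. norm (\<gamma> ^ t * expected_reward P \<pi> \<rho> g t) \<le> \<gamma> ^ t * ?B"
    using assms(5) by (auto simp: abs_mult intro!: mult_left_mono)
  show "summable (\<lambda>t. \<gamma> ^ t * ?B)"
    using assms(5,6) by (intro summable_mult2) simp
qed

lemma value_fn_bounds:
  assumes "is_kernel P" and "is_policy \<pi>" and "is_dist \<rho>"
    and "\<And>s a. m \<le> g s a \<and> g s a \<le> M" and "0 \<le> \<gamma>" "\<gamma> < 1"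
  shows "m / (1 - \<gamma>) \<le> value_fn P \<gamma> \<rho> g \<pi> \<and> value_fn P \<gamma> \<rho> g \<pi> \<le> M / (1 - \<gamma>)"
proof -
  have geom: "(\<lambda>t. \<gamma> ^ t * k) sums (k / (1 - \<gamma>))" for k
    using sums_mult2[OF geometric_sums[of \<gamma>], of k] assms(5,6) by (simp add: field_simps)
  have summable: "summable (\<lambda>t. \<gamma> ^ t * expected_reward P \<pi> \<rho> g t)"
    using summable_discounted_expected_reward[where g=g, OF assms] .
  have stage: "\<gamma> ^ t * m \<le> \<gamma> ^ t * expected_reward P \<pi> \<rho> g t"
              "\<gamma> ^ t * expected_reward P \<pi> \<rho> g t \<le> \<gamma> ^ t * M" for t
    using expected_reward_bounds[where g=g and t=t, OF assms(1-4)] assms(5) by (auto intro: mult_left_mono)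
  show ?thesis
    unfolding value_fn_expected_reward
    using sums_le[OF stage(1) geom summable_sums[OF summable]]
          sums_le[OF stage(2) summable_sums[OF summable] geom]
    by simp
qed

lemma value_fn_add:
  assumes "is_kernel P" and "is_policy \<pi>" and "is_dist \<rho>"
    and "\<And>s a. mg \<le> g s a \<and> g s a \<le> Mg" and "\<And>s a. mh \<le> h s a \<and> h s a \<le> Mh"
    and "0 \<le> \<gamma>" "\<gamma> < 1"
  shows "value_fn P \<gamma> \<rho> (\<lambda>s a. g s a + h s a) \<pi> = value_fn P \<gamma> \<rho> g \<pi> + value_fn P \<gamma> \<rho> h \<pi>"
proof -
  have "\<gamma> ^ t * expected_reward P \<pi> \<rho> (\<lambda>s a. g s a + h s a) t
      = \<gamma> ^ t * expected_reward P \<pi> \<rho> g t + \<gamma> ^ t * expected_reward P \<pi> \<rho> h t" for t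
    by (simp add: expected_reward_def distrib_left sum.distrib)
  then show ?thesis
    unfolding value_fn_expected_reward
    using suminf_add[OF summable_discounted_expected_reward[where g=g, OF assms(1-4,6,7)]
                        summable_discounted_expected_reward[where g=h, OF assms(1-3,5-7)]]
    by simp
qed

lemma value_fn_perturbed_reward_bounds:
  assumes "is_kernel P" and "is_policy \<pi>" and "is_dist \<rho>"
    and "\<And>s a. m \<le> r s a \<and> r s a \<le> M" and "\<And>s a. 0 \<le> \<xi> s a \<and> \<xi> s a \<le> \<omega>"
    and "0 \<le> \<gamma>" "\<gamma> < 1"
  shows "value_fn P \<gamma> \<rho> r \<pi> \<le> value_fn P \<gamma> \<rho> (\<lambda>s a. r s a + \<xi> s a) \<pi>
       \<and> value_fn P \<gamma> \<rho> (\<lambda>s a. r s a + \<xi> s a) \<pi> \<le> value_fn P \<gamma> \<rho> r \<pi> + \<omega> / (1 - \<gamma>)"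
  using value_fn_add[where g=r and h=\<xi>, OF assms] value_fn_bounds[where g=\<xi>, OF assms(1-3,5-7)]
  by simp

lemma lagrangian_le_dual_fn:
  assumes "is_kernel P" and "is_dist \<rho>" and "0 \<le> \<gamma>" "\<gamma> < 1" and "0 \<le> lam"
    and "\<And>s a. mg \<le> g s a \<and> g s a \<le> Mg" and "\<And>s a. mc \<le> c s a \<and> c s a \<le> Mc"
    and "is_policy \<pi>"
  shows "value_fn P \<gamma> \<rho> g \<pi> + lam * (value_fn P \<gamma> \<rho> c \<pi> - b) \<le> dual_fn P \<gamma> \<rho> g c b lam"
proof -
  let ?L = "\<lambda>\<pi>. value_fn P \<gamma> \<rho> g \<pi> + lam * (value_fn P \<gamma> \<rho> c \<pi> - b)"
  have "?L \<pi>' \<le> Mg / (1 - \<gamma>) + lam * (Mc / (1 - \<gamma>) - b)" if "is_policy \<pi>'" for \<pi>'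
    using value_fn_bounds[where g=g, OF assms(1) that assms(2,6,3,4)]
          value_fn_bounds[where g=c, OF assms(1) that assms(2,7,3,4)] assms(5)
    by (smt (verit) mult_left_mono)
  then have "bdd_above (?L ` {\<pi>. is_policy \<pi>})"
    by (intro bdd_aboveI2) auto
  then show ?thesis
    unfolding dual_fn_def using assms(8) by (auto intro: cSUP_upper)
qed

theorem mainTheorem9:
  fixes P Phat :: "'s::finite \<Rightarrow> 'a::finite \<Rightarrow> 's \<Rightarrow> real"
    and r c \<xi> :: "'s \<Rightarrow> 'a \<Rightarrow> real"
    and \<rho> :: "'s \<Rightarrow> real"
    and b b' \<gamma> \<omega> \<Delta> \<epsilon>opt lamstar :: real
    and \<pi>star \<pi>hatstar \<pi>bar :: "'s \<Rightarrow> 'a \<Rightarrow> real"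
  assumes P: "is_kernel P" and Phat: "is_kernel Phat"
    and r01: "\<And>s a. 0 \<le> r s a \<and> r s a \<le> 1"
    and c01: "\<And>s a. 0 \<le> c s a \<and> c s a \<le> 1"
    and \<xi>: "\<And>s a. 0 \<le> \<xi> s a \<and> \<xi> s a \<le> \<omega>"
    and \<rho>: "is_dist \<rho>"
    and \<gamma>: "0 \<le> \<gamma>" "\<gamma> < 1"
    and \<Delta>: "\<Delta> > 0" and eps: "\<epsilon>opt < \<Delta>" and b': "b' = b + \<Delta>"
    and opt: "cmdp_optimal P \<gamma> \<rho> r c b \<pi>star"
    and optHat: "cmdp_optimal Phat \<gamma> \<rho> (\<lambda>s a. r s a + \<xi> s a) c b' \<pi>hatstar"
    and lam_nonneg: "lamstar \<ge> 0"
    and lam_min: "\<And>lam. lam \<ge> 0 \<Longrightarrow>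
        dual_fn Phat \<gamma> \<rho> (\<lambda>s a. r s a + \<xi> s a) c b' lamstar
          \<le> dual_fn Phat \<gamma> \<rho> (\<lambda>s a. r s a + \<xi> s a) c b' lam"
    and strong_duality:
      "dual_fn Phat \<gamma> \<rho> (\<lambda>s a. r s a + \<xi> s a) c b' lamstar
         = value_fn Phat \<gamma> \<rho> (\<lambda>s a. r s a + \<xi> s a) \<pi>hatstar"
    and pibar: "is_policy \<pi>bar"
    and pibar_r: "value_fn Phat \<gamma> \<rho> (\<lambda>s a. r s a + \<xi> s a) \<pi>bar
                    \<ge> value_fn Phat \<gamma> \<rho> (\<lambda>s a. r s a + \<xi> s a) \<pi>hatstar - \<epsilon>opt"
    and pibar_c: "value_fn Phat \<gamma> \<rho> c \<pi>bar \<ge> b' - \<epsilon>opt"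
    and gap_bar: "\<bar>value_fn P \<gamma> \<rho> c \<pi>bar - value_fn Phat \<gamma> \<rho> c \<pi>bar\<bar> \<le> \<Delta> - \<epsilon>opt"
    and gap_star: "\<bar>value_fn P \<gamma> \<rho> c \<pi>star - value_fn Phat \<gamma> \<rho> c \<pi>star\<bar> \<le> \<Delta>"
  shows "value_fn P \<gamma> \<rho> c \<pi>bar \<ge> b
    \<and> value_fn P \<gamma> \<rho> r \<pi>star - value_fn P \<gamma> \<rho> r \<pi>bar
        \<le> 2 * \<omega> / (1 - \<gamma>) + \<epsilon>opt + 2 * \<Delta> * lamstar
          + \<bar>value_fn P \<gamma> \<rho> (\<lambda>s a. r s a + \<xi> s a) \<pi>star
               - value_fn Phat \<gamma> \<rho> (\<lambda>s a. r s a + \<xi> s a) \<pi>star\<bar>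
          + \<bar>value_fn Phat \<gamma> \<rho> (\<lambda>s a. r s a + \<xi> s a) \<pi>bar
               - value_fn P \<gamma> \<rho> (\<lambda>s a. r s a + \<xi> s a) \<pi>bar\<bar>"
proof -
  define rp where "rp = (\<lambda>s a. r s a + \<xi> s a)"
  have \<pi>star: "is_policy \<pi>star" and feasible: "value_fn P \<gamma> \<rho> c \<pi>star \<ge> b"
    using opt unfolding cmdp_optimal_def by auto
  have rp_bounds: "\<And>s a. 0 \<le> rp s a \<and> rp s a \<le> 1 + \<omega>"
    unfolding rp_def using r01 \<xi> by (smt (verit))
  have "value_fn Phat \<gamma> \<rho> rp \<pi>star + lamstar * (value_fn Phat \<gamma> \<rho> c \<pi>star - b')
      \<le> value_fn Phat \<gamma> \<rho> rp \<pi>hatstar"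
    using lagrangian_le_dual_fn[where g=rp and c=c and b=b', OF Phat \<rho> \<gamma> lam_nonneg rp_bounds c01 \<pi>star]
          strong_duality by (simp add: rp_def)
  moreover have "lamstar * (value_fn Phat \<gamma> \<rho> c \<pi>star - b') \<ge> lamstar * (- 2 * \<Delta>)"
    using gap_star feasible b' lam_nonneg by (intro mult_left_mono) auto
  ultimately have "value_fn Phat \<gamma> \<rho> rp \<pi>star - 2 * \<Delta> * lamstar \<le> value_fn Phat \<gamma> \<rho> rp \<pi>bar + \<epsilon>opt"
    using pibar_r by (simp add: rp_def algebra_simps)
  moreover have "\<omega> / (1 - \<gamma>) \<le> 2 * \<omega> / (1 - \<gamma>)"
  proof -
    have "0 \<le> \<omega>"
      using \<xi> by (meson order_trans)
    then show ?thesis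
      using \<gamma> by (simp add: divide_right_mono)
  qed
  ultimately show ?thesis
    using value_fn_perturbed_reward_bounds[where r=r and \<xi>=\<xi>, OF P \<pi>star \<rho> r01 \<xi> \<gamma>]
          value_fn_perturbed_reward_bounds[where r=r and \<xi>=\<xi>, OF P pibar \<rho> r01 \<xi> \<gamma>]
          gap_bar pibar_c b'
    unfolding rp_def by (smt (verit))
qed

end
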